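(* Let $\alpha\le0$ and $\beta<0$. Then for every integer $n\ge2$ and every $1\le k\le n-1$, \[ \big(S_{\alpha,\beta}(n,k)\big)^2\ge\Big(1+\frac1k\Big)\Big(1+\frac1{n-k}\Big)S_{\alpha,\beta}(n,k+1)\,S_{\alpha,\beta}(n,k-1); \] in particular the sequence $(S_{\alpha,\beta}(n,k))_{0\le k\le n}$ is log-concave.
   Context: For real $a$ and integer $n\ge 1$, $\langle a\rangle_n:=a(a+1)\cdots(a+n-1)$ and $\langle a\rangle_0:=1$. For real $\alpha,\beta$ and integers $0\le k\le n$, $S_{\alpha,\beta}(n,k):=\frac{1}{k!}\sum_{j=0}^{k}(-1)^{k-j}\binom{k}{j}\langle-\alpha-\beta j\rangle_n$. *)

theory Defs
  imports Complex_Main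
begin

definition S_ab :: "real \<Rightarrow> real \<Rightarrow> nat \<Rightarrow> nat \<Rightarrow> real" where
  "S_ab \<alpha> \<beta> n k = (1 / fact k) *
     (\<Sum>j=0..k. (-1) ^ (k - j) * real (k choose j) * pochhammer (- \<alpha> - \<beta> * real j) n)"

end

theory Submission
  imports Defs
begin

(* Write S(n,k) = (n choose k) * u(n,k). Since <x>_(n+1) = <x>_n * (x + n) and k! S(n,k) is the
   k-th forward difference of j |-> <-alpha - beta j>_n, one gets
     S(n+1,k+1) = (n - alpha - beta (k+1)) S(n,k+1) - beta S(n,k),
   which for u reads
     (n+1) u(n+1,k) = (n - alpha - beta k) (n+1-k) u(n,k) - beta k u(n,k-1),
   a recurrence with nonnegative coefficients when alpha <= 0 and beta < 0. Log-concavity of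
   u(n,-) propagates from n to n+1: expanding u(n+1,k-1) u(n+1,k+1) by the recurrence, each term
   is dominated by the matching term of u(n+1,k)^2 thanks to log-concavity of u(n,-) at k and
   k-1, and what remains of u(n+1,k)^2 is nonnegative. Finally, log-concavity of u is exactly
   the claimed inequality for S, because
     (n choose k)^2 = (1 + 1/k) (1 + 1/(n-k)) (n choose k-1) (n choose k+1). *)

definition forward_diff :: "nat \<Rightarrow> (nat \<Rightarrow> real) \<Rightarrow> real" where
  "forward_diff k f = (\<Sum>j=0..k. (-1) ^ (k - j) * real (k choose j) * f j)"

lemma forward_diff_lincomb:
  "forward_diff k (\<lambda>j. a * f j + b * g j) = a * forward_diff k f + b * forward_diff k g"
  unfolding forward_diff_def by (simp add: algebra_simps sum.distrib sum_distrib_left)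

lemma forward_diff_Suc_times_compl:
  "forward_diff (Suc k) (\<lambda>j. (real (Suc k) - real j) * f j) = - real (Suc k) * forward_diff k f"
proof -
  have absorb: "real (Suc k choose j) * (real (Suc k) - real j) = real (Suc k) * real (k choose j)"
    if "j \<le> Suc k" for j
  proof -
    have "(Suc k - j) * (Suc k choose j) = Suc k * (k choose j)"
      using binomial_absorb_comp[of "Suc k" j] by simp
    then show ?thesis
      using that by (metis of_nat_diff of_nat_mult mult.commute)
  qed
  have "forward_diff (Suc k) (\<lambda>j. (real (Suc k) - real j) * f j)
      = (\<Sum>j=0..Suc k. (-1) ^ (Suc k - j) * (real (Suc k) * real (k choose j)) * f j)"
    unfolding forward_diff_def by (intro sum.cong refl) (simp add: absorb del: of_nat_Suc flip: mult.assoc)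
  also have "\<dots> = (\<Sum>j=0..k. (-1) ^ (Suc k - j) * (real (Suc k) * real (k choose j)) * f j)"
    by simp
  also have "\<dots> = - real (Suc k) * forward_diff k f"
    unfolding forward_diff_def sum_distrib_left by (intro sum.cong refl) (simp add: Suc_diff_le algebra_simps)
  finally show ?thesis .
qed

lemma forward_diff_const_Suc: "forward_diff (Suc k) (\<lambda>_. 1) = 0"
proof -
  have "forward_diff (Suc k) (\<lambda>_. 1) = (\<Sum>j\<le>Suc k. real (Suc k choose j) * 1 ^ j * (-1) ^ (Suc k - j))"
    unfolding forward_diff_def by (intro sum.cong) (auto simp: atLeast0AtMost)
  also have "\<dots> = (1 + -1) ^ Suc k"
    by (rule binomial_ring[symmetric])
  finally show ?thesis by simp
qed

lemma S_ab_eq_forward_diff: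
  "S_ab \<alpha> \<beta> n k = forward_diff k (\<lambda>j. pochhammer (- \<alpha> - \<beta> * real j) n) / fact k"
  unfolding S_ab_def forward_diff_def by simp

lemma S_ab_Suc_Suc:
  "S_ab \<alpha> \<beta> (Suc n) (Suc k) =
     (real n - \<alpha> - \<beta> * real (Suc k)) * S_ab \<alpha> \<beta> n (Suc k) - \<beta> * S_ab \<alpha> \<beta> n k"
proof -
  define P where "P = (\<lambda>j. pochhammer (- \<alpha> - \<beta> * real j) n)"
  define K where "K = real (Suc k)"
  have "pochhammer (- \<alpha> - \<beta> * real j) (Suc n)
      = (real n - \<alpha> - \<beta> * K) * P j + \<beta> * ((K - real j) * P j)" for j
    unfolding P_def by (simp add: pochhammer_Suc algebra_simps)
  then have "forward_diff (Suc k) (\<lambda>j. pochhammer (- \<alpha> - \<beta> * real j) (Suc n))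
      = (real n - \<alpha> - \<beta> * K) * forward_diff (Suc k) P - \<beta> * K * forward_diff k P"
    by (simp add: forward_diff_lincomb forward_diff_Suc_times_compl K_def del: of_nat_Suc)
  then have "S_ab \<alpha> \<beta> (Suc n) (Suc k)
      = (real n - \<alpha> - \<beta> * K) * (forward_diff (Suc k) P / fact (Suc k))
        - \<beta> * (K * forward_diff k P / fact (Suc k))"
    by (simp add: S_ab_eq_forward_diff diff_divide_distrib)
  also have "K * forward_diff k P / fact (Suc k) = forward_diff k P / fact k"
    by (simp add: K_def del: of_nat_Suc)
  finally show ?thesis
    by (simp add: S_ab_eq_forward_diff P_def K_def del: of_nat_Suc)
qed

lemma S_ab_0_right: "S_ab \<alpha> \<beta> n 0 = pochhammer (- \<alpha>) n"
  unfolding S_ab_def by simp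

lemma S_ab_0_Suc: "S_ab \<alpha> \<beta> 0 (Suc k) = 0"
  using forward_diff_const_Suc[of k] by (simp add: S_ab_eq_forward_diff)

lemma S_ab_eq_0: "n < k \<Longrightarrow> S_ab \<alpha> \<beta> n k = 0"
proof (induction n arbitrary: k)
  case 0
  then show ?case by (cases k) (auto simp: S_ab_0_Suc)
next
  case (Suc n)
  then show ?case by (cases k) (auto simp: S_ab_Suc_Suc)
qed

lemma S_ab_diag: "S_ab \<alpha> \<beta> n n = (- \<beta>) ^ n"
  by (induction n) (simp_all add: S_ab_0_right S_ab_Suc_Suc S_ab_eq_0)

lemma pochhammer_nonneg_of_nonneg:
  fixes x :: "'a :: linordered_semidom"
  shows "x \<ge> 0 \<Longrightarrow> pochhammer x n \<ge> 0"
  by (induction n) (auto simp: pochhammer_Suc)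

lemma S_ab_nonneg:
  assumes "\<alpha> \<le> 0" "\<beta> \<le> 0"
  shows "S_ab \<alpha> \<beta> n k \<ge> 0"
proof (induction n arbitrary: k)
  case 0
  then show ?case by (cases k) (auto simp: S_ab_0_Suc S_ab_0_right)
next
  case (Suc n)
  show ?case
  proof (cases k)
    case 0
    then show ?thesis using assms by (simp add: S_ab_0_right pochhammer_nonneg_of_nonneg)
  next
    case (Suc k')
    have "\<beta> * real k \<le> 0"
      using assms by (simp add: mult_nonpos_nonneg)
    then have "(real n - \<alpha> - \<beta> * real k) * S_ab \<alpha> \<beta> n k \<ge> 0"
      using assms Suc.IH by simp
    moreover have "- \<beta> * S_ab \<alpha> \<beta> n k' \<ge> 0"
      using assms Suc.IH by (simp add: mult_nonpos_nonneg)
    ultimately show ?thesis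
      by (simp add: Suc S_ab_Suc_Suc del: of_nat_Suc)
  qed
qed

lemma S_ab_pos:
  assumes "\<alpha> \<le> 0" "\<beta> < 0"
  shows "1 \<le> k \<Longrightarrow> k \<le> n \<Longrightarrow> S_ab \<alpha> \<beta> n k > 0"
proof (induction n arbitrary: k)
  case 0
  then show ?case by simp
next
  case (Suc n)
  then obtain k' where k: "k = Suc k'" by (cases k) auto
  show ?case
  proof (cases "k' = n")
    case True
    have "(- \<beta>) ^ n > 0"
      using assms by simp
    then show ?thesis
      using True assms by (simp add: k S_ab_diag mult_neg_pos)
  next
    case False
    then have "S_ab \<alpha> \<beta> n k > 0"
      using Suc by (simp add: k)
    moreover have "\<beta> * real k < 0"
      using assms by (simp add: k mult_neg_pos)
    ultimately have "(real n - \<alpha> - \<beta> * real k) * S_ab \<alpha> \<beta> n k > 0"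
      using assms by simp
    moreover have "- \<beta> * S_ab \<alpha> \<beta> n k' \<ge> 0"
      using assms S_ab_nonneg[of \<alpha> \<beta>] by (simp add: mult_nonpos_nonneg)
    ultimately show ?thesis
      by (simp add: k S_ab_Suc_Suc del: of_nat_Suc)
  qed
qed

definition S_norm :: "real \<Rightarrow> real \<Rightarrow> nat \<Rightarrow> nat \<Rightarrow> real" where
  "S_norm \<alpha> \<beta> n k = S_ab \<alpha> \<beta> n k / real (n choose k)"

lemma S_ab_eq_binomial_mult_S_norm: "S_ab \<alpha> \<beta> n k = real (n choose k) * S_norm \<alpha> \<beta> n k"
  by (cases "k \<le> n") (simp_all add: S_norm_def S_ab_eq_0)

lemma S_norm_nonneg: "\<alpha> \<le> 0 \<Longrightarrow> \<beta> \<le> 0 \<Longrightarrow> S_norm \<alpha> \<beta> n k \<ge> 0"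
  by (simp add: S_norm_def S_ab_nonneg)

lemma S_norm_pos: "\<alpha> \<le> 0 \<Longrightarrow> \<beta> < 0 \<Longrightarrow> 1 \<le> k \<Longrightarrow> k \<le> n \<Longrightarrow> S_norm \<alpha> \<beta> n k > 0"
  by (simp add: S_norm_def S_ab_pos)

lemma S_norm_eq_0: "n < k \<Longrightarrow> S_norm \<alpha> \<beta> n k = 0"
  by (simp add: S_norm_def S_ab_eq_0)

lemma S_norm_Suc:
  assumes "j \<le> Suc n"
  shows "real (Suc n) * S_norm \<alpha> \<beta> (Suc n) j =
    (real n - \<alpha> - \<beta> * real j) * (real (Suc n) - real j) * S_norm \<alpha> \<beta> n j
    - \<beta> * real j * S_norm \<alpha> \<beta> n (j - 1)"
proof (cases j)
  case 0
  then show ?thesis by (simp add: S_norm_def S_ab_0_right pochhammer_Suc algebra_simps)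
next
  case (Suc k)
  define N where "N = real (Suc n choose j)"
  have "N > 0"
    using assms by (simp add: N_def)
  have absorb_lower: "real (Suc n) * real (n choose k) = N * real j"
    unfolding N_def Suc by (metis Suc_times_binomial_eq of_nat_mult)
  have absorb_upper: "real (Suc n) * real (n choose j) = N * (real (Suc n) - real j)"
  proof -
    have "(Suc n - j) * (Suc n choose j) = Suc n * (n choose j)"
      using binomial_absorb_comp[of "Suc n" j] by simp
    then show ?thesis
      using assms unfolding N_def by (metis of_nat_diff of_nat_mult mult.commute)
  qed
  have "N * (real (Suc n) * S_norm \<alpha> \<beta> (Suc n) j) = real (Suc n) * S_ab \<alpha> \<beta> (Suc n) j"
    by (simp add: S_ab_eq_binomial_mult_S_norm N_def)
  also have "\<dots> = real (Suc n) * ((real n - \<alpha> - \<beta> * real j) * S_ab \<alpha> \<beta> n j - \<beta> * S_ab \<alpha> \<beta> n k)"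
    by (simp add: Suc S_ab_Suc_Suc del: of_nat_Suc)
  also have "\<dots> = (real n - \<alpha> - \<beta> * real j) * (real (Suc n) * real (n choose j)) * S_norm \<alpha> \<beta> n j
        - \<beta> * (real (Suc n) * real (n choose k)) * S_norm \<alpha> \<beta> n k"
    by (simp add: S_ab_eq_binomial_mult_S_norm algebra_simps del: of_nat_Suc)
  also have "\<dots> = N * ((real n - \<alpha> - \<beta> * real j) * (real (Suc n) - real j) * S_norm \<alpha> \<beta> n j
        - \<beta> * real j * S_norm \<alpha> \<beta> n k)"
    unfolding absorb_lower absorb_upper by (simp add: algebra_simps)
  finally show ?thesis
    using \<open>N > 0\<close> by (simp add: Suc del: of_nat_Suc)
qed

(* With x, y, z, w = u(n,k), u(n,k-1), u(n,k-2), u(n,k+1), r = n+1-k, c = n - alpha and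
   b = -beta, the three factors are (n+1) u(n+1,k-1), (n+1) u(n+1,k+1) and (n+1) u(n+1,k). *)
lemma log_concave_recurrence_step:
  fixes b c k r x y z w :: real
  assumes "b > 0" "c \<ge> 0" "k \<ge> 1" "r \<ge> 1"
    and "x \<ge> 0" "y \<ge> 0"
    and lc: "y * w \<le> x\<^sup>2"
    and lc_prev: "(k - 1) * (z * x) \<le> (k - 1) * y\<^sup>2"
    and lc_outer: "(k - 1) * (z * w) \<le> (k - 1) * (y * x)"
  shows "((c + b * (k - 1)) * (r + 1) * y + b * (k - 1) * z) * ((c + b * (k + 1)) * (r - 1) * w + b * (k + 1) * x)
           \<le> ((c + b * k) * r * x + b * k * y)\<^sup>2"
proof -
  define p q where "p = (c + b * (k - 1)) * (r + 1)" and "q = (c + b * (k + 1)) * (r - 1)"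
  have "p \<ge> 0" "q \<ge> 0"
    unfolding p_def q_def using assms by simp_all
  have lhs: "((c + b * (k - 1)) * (r + 1) * y + b * (k - 1) * z) * ((c + b * (k + 1)) * (r - 1) * w + b * (k + 1) * x)
     = p * q * (y * w) + p * b * (k + 1) * (y * x) + b * q * ((k - 1) * (z * w)) + b * b * (k + 1) * ((k - 1) * (z * x))"
    unfolding p_def q_def by algebra
  have rhs: "((c + b * k) * r * x + b * k * y)\<^sup>2
     = p * q * x\<^sup>2 + p * b * (k + 1) * (y * x) + b * q * ((k - 1) * (y * x)) + b * b * (k + 1) * ((k - 1) * y\<^sup>2)
       + ((b * y - c * x)\<^sup>2 + (2 * b * c * k + b\<^sup>2 * (k\<^sup>2 - 1) + b\<^sup>2 * r\<^sup>2) * x\<^sup>2 + 2 * b\<^sup>2 * r * x * y)"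
    unfolding p_def q_def by algebra
  have "k\<^sup>2 \<ge> 1"
    using assms(3) by simp
  then have "(2 * b * c * k + b\<^sup>2 * (k\<^sup>2 - 1) + b\<^sup>2 * r\<^sup>2) * x\<^sup>2 \<ge> 0"
    using assms(1-3) by simp
  moreover have "2 * b\<^sup>2 * r * x * y \<ge> 0"
    using assms by simp
  moreover have "p * q * (y * w) \<le> p * q * x\<^sup>2"
    using lc \<open>p \<ge> 0\<close> \<open>q \<ge> 0\<close> by (simp add: mult_left_mono)
  moreover have "b * q * ((k - 1) * (z * w)) \<le> b * q * ((k - 1) * (y * x))"
    using lc_outer \<open>q \<ge> 0\<close> assms(1) by (simp add: mult_left_mono)
  moreover have "b * b * (k + 1) * ((k - 1) * (z * x)) \<le> b * b * (k + 1) * ((k - 1) * y\<^sup>2)"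
    using lc_prev assms(1,3) by (simp add: mult_left_mono)
  ultimately show ?thesis
    unfolding lhs rhs using zero_le_power2[of "b * y - c * x"] by linarith
qed

lemma log_concave_outer_le_inner:
  fixes x y z w :: real
  assumes "z * x \<le> y\<^sup>2" "y * w \<le> x\<^sup>2" "x > 0" "y > 0" "z \<ge> 0" "w \<ge> 0"
  shows "z * w \<le> y * x"
proof -
  have "(z * w) * (x * y) \<le> (y * x) * (x * y)"
    using mult_mono[OF assms(1,2)] assms by (simp add: power2_eq_square algebra_simps)
  then show ?thesis
    using assms(3,4) by (simp add: mult.commute)
qed

lemma S_norm_log_concave_Suc:
  assumes "\<alpha> \<le> 0" "\<beta> < 0" "1 \<le> k" "k \<le> n"
    and IH: "\<And>i. 1 \<le> i \<Longrightarrow> S_norm \<alpha> \<beta> n (i - 1) * S_norm \<alpha> \<beta> n (i + 1) \<le> (S_norm \<alpha> \<beta> n i)\<^sup>2"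
  shows "S_norm \<alpha> \<beta> (Suc n) (k - 1) * S_norm \<alpha> \<beta> (Suc n) (k + 1) \<le> (S_norm \<alpha> \<beta> (Suc n) k)\<^sup>2"
proof -
  define x y z w where "x = S_norm \<alpha> \<beta> n k" and "y = S_norm \<alpha> \<beta> n (k - 1)"
    and "z = S_norm \<alpha> \<beta> n (k - 2)" and "w = S_norm \<alpha> \<beta> n (k + 1)"
  define b c r where "b = - \<beta>" and "c = real n - \<alpha>" and "r = real (Suc n) - real k"
  have nonneg: "S_norm \<alpha> \<beta> m i \<ge> 0" for m i
    using assms by (simp add: S_norm_nonneg)
  have lc: "y * w \<le> x\<^sup>2"
    using IH[OF assms(3)] by (simp add: x_def y_def w_def)
  have lc_weighted: "(real k - 1) * (z * x) \<le> (real k - 1) * y\<^sup>2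
      \<and> (real k - 1) * (z * w) \<le> (real k - 1) * (y * x)"
  proof (cases "k = 1")
    case False
    then have "z * x \<le> y\<^sup>2"
      using IH[of "k - 1"] assms(3) by (simp add: x_def y_def z_def numeral_2_eq_2)
    moreover have "x > 0" "y > 0"
      using S_norm_pos[OF assms(1,2)] False assms(3,4) by (simp_all add: x_def y_def)
    ultimately have "z * w \<le> y * x"
      using lc nonneg by (intro log_concave_outer_le_inner) (simp_all add: z_def w_def)
    with \<open>z * x \<le> y\<^sup>2\<close> show ?thesis
      using assms(3) by (simp add: mult_left_mono)
  qed simp
  have rec_prev: "real (Suc n) * S_norm \<alpha> \<beta> (Suc n) (k - 1)
      = (c + b * (real k - 1)) * (r + 1) * y + b * (real k - 1) * z"
    using S_norm_Suc[of "k - 1" n \<alpha> \<beta>] assms(3,4)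
    by (simp add: y_def z_def b_def c_def r_def numeral_2_eq_2 algebra_simps)
  have rec_next: "real (Suc n) * S_norm \<alpha> \<beta> (Suc n) (k + 1)
      = (c + b * (real k + 1)) * (r - 1) * w + b * (real k + 1) * x"
    using S_norm_Suc[of "k + 1" n \<alpha> \<beta>] assms(4)
    by (simp add: x_def w_def b_def c_def r_def algebra_simps)
  have rec: "real (Suc n) * S_norm \<alpha> \<beta> (Suc n) k = (c + b * real k) * r * x + b * real k * y"
    using S_norm_Suc[of k n \<alpha> \<beta>] assms(4)
    by (simp add: x_def y_def b_def c_def r_def algebra_simps)
  have "(real (Suc n) * S_norm \<alpha> \<beta> (Suc n) (k - 1)) * (real (Suc n) * S_norm \<alpha> \<beta> (Suc n) (k + 1))
      \<le> (real (Suc n) * S_norm \<alpha> \<beta> (Suc n) k)\<^sup>2"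
    unfolding rec_prev rec_next rec
    using assms(1-4) nonneg lc lc_weighted
    by (intro log_concave_recurrence_step) (simp_all add: b_def c_def r_def x_def y_def)
  then have "(real (Suc n))\<^sup>2 * (S_norm \<alpha> \<beta> (Suc n) (k - 1) * S_norm \<alpha> \<beta> (Suc n) (k + 1))
      \<le> (real (Suc n))\<^sup>2 * (S_norm \<alpha> \<beta> (Suc n) k)\<^sup>2"
    by (simp only: power_mult_distrib power2_eq_square ac_simps)
  then show ?thesis
    by simp
qed

lemma S_norm_log_concave:
  assumes "\<alpha> \<le> 0" "\<beta> < 0" "1 \<le> k"
  shows "S_norm \<alpha> \<beta> n (k - 1) * S_norm \<alpha> \<beta> n (k + 1) \<le> (S_norm \<alpha> \<beta> n k)\<^sup>2"
  using assms(3)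
proof (induction n arbitrary: k)
  case 0
  then show ?case by (simp add: S_norm_eq_0)
next
  case (Suc n)
  show ?case
  proof (cases "k \<le> n")
    case True
    then show ?thesis
      using S_norm_log_concave_Suc[OF assms(1,2) Suc.prems] Suc.IH by blast
  next
    case False
    then show ?thesis
      using assms by (simp add: S_norm_eq_0 S_norm_nonneg)
  qed
qed

lemma Suc_times_binomial_Suc: "Suc k * (n choose Suc k) = (n - k) * (n choose k)"
  by (simp only: binomial_absorption binomial_absorb_comp)

lemma binomial_neighbours_product:
  assumes "1 \<le> k" "k < n"
  shows "(1 + 1 / real k) * (1 + 1 / real (n - k)) * (real (n choose (k + 1)) * real (n choose (k - 1)))
           = (real (n choose k))\<^sup>2"
proof -
  obtain j where j: "k = Suc j"
    using assms(1) by (cases k) auto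
  have upper: "real (k + 1) * real (n choose (k + 1)) = real (n - k) * real (n choose k)"
    using Suc_times_binomial_Suc[of k n] by (metis Suc_eq_plus1 of_nat_mult)
  have lower: "real (n - k + 1) * real (n choose (k - 1)) = real k * real (n choose k)"
  proof -
    have "n - j = n - k + 1"
      using j assms(2) by simp
    then show ?thesis
      using Suc_times_binomial_Suc[of j n] j by (metis diff_Suc_1 of_nat_mult)
  qed
  have "real k > 0" "real (n - k) > 0"
    using assms by simp_all
  then have "(1 + 1 / real k) * (1 + 1 / real (n - k)) * (real (n choose (k + 1)) * real (n choose (k - 1)))
      = (real (k + 1) * real (n choose (k + 1))) * (real (n - k + 1) * real (n choose (k - 1)))
        / (real k * real (n - k))"
    by (simp add: field_simps)
  also have "\<dots> = (real (n choose k))\<^sup>2"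
    unfolding upper lower using \<open>real k > 0\<close> \<open>real (n - k) > 0\<close> by (simp add: power2_eq_square)
  finally show ?thesis .
qed

lemma S_ab_ultra_log_concave:
  assumes "\<alpha> \<le> 0" "\<beta> < 0" "1 \<le> k" "k < n"
  shows "(1 + 1 / real k) * (1 + 1 / real (n - k)) * S_ab \<alpha> \<beta> n (k + 1) * S_ab \<alpha> \<beta> n (k - 1)
           \<le> (S_ab \<alpha> \<beta> n k)\<^sup>2"
proof -
  have "(1 + 1 / real k) * (1 + 1 / real (n - k)) * S_ab \<alpha> \<beta> n (k + 1) * S_ab \<alpha> \<beta> n (k - 1)
      = (1 + 1 / real k) * (1 + 1 / real (n - k)) * (real (n choose (k + 1)) * real (n choose (k - 1)))
        * (S_norm \<alpha> \<beta> n (k - 1) * S_norm \<alpha> \<beta> n (k + 1))"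
    by (simp add: S_ab_eq_binomial_mult_S_norm algebra_simps)
  also have "\<dots> = (real (n choose k))\<^sup>2 * (S_norm \<alpha> \<beta> n (k - 1) * S_norm \<alpha> \<beta> n (k + 1))"
    by (simp only: binomial_neighbours_product[OF assms(3,4)])
  also have "\<dots> \<le> (real (n choose k))\<^sup>2 * (S_norm \<alpha> \<beta> n k)\<^sup>2"
    using S_norm_log_concave[OF assms(1-3)] by (simp add: mult_left_mono)
  also have "\<dots> = (S_ab \<alpha> \<beta> n k)\<^sup>2"
    by (simp add: S_ab_eq_binomial_mult_S_norm power_mult_distrib)
  finally show ?thesis .
qed

theorem mainTheorem10:
  fixes \<alpha> \<beta> :: real and n k :: nat
  assumes "\<alpha> \<le> 0" and "\<beta> < 0" and "n \<ge> 2" and "1 \<le> k" and "k \<le> n - 1"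
  shows "(S_ab \<alpha> \<beta> n k)^2 \<ge>
           (1 + 1 / real k) * (1 + 1 / real (n - k)) * S_ab \<alpha> \<beta> n (k + 1) * S_ab \<alpha> \<beta> n (k - 1)
         \<and> (S_ab \<alpha> \<beta> n k)^2 \<ge> S_ab \<alpha> \<beta> n (k + 1) * S_ab \<alpha> \<beta> n (k - 1)"
proof
  have "k < n"
    using assms(3,5) by simp
  then show ultra: "(1 + 1 / real k) * (1 + 1 / real (n - k)) * S_ab \<alpha> \<beta> n (k + 1) * S_ab \<alpha> \<beta> n (k - 1)
      \<le> (S_ab \<alpha> \<beta> n k)^2"
    using S_ab_ultra_log_concave assms(1,2,4) by blast
  have "1 * 1 \<le> (1 + 1 / real k) * (1 + 1 / real (n - k))"
    by (rule mult_mono) simp_all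
  moreover have "S_ab \<alpha> \<beta> n (k + 1) * S_ab \<alpha> \<beta> n (k - 1) \<ge> 0"
    using assms(1,2) by (simp add: S_ab_nonneg)
  ultimately have "S_ab \<alpha> \<beta> n (k + 1) * S_ab \<alpha> \<beta> n (k - 1)
      \<le> (1 + 1 / real k) * (1 + 1 / real (n - k)) * (S_ab \<alpha> \<beta> n (k + 1) * S_ab \<alpha> \<beta> n (k - 1))"
    using mult_right_mono by fastforce
  with ultra show "S_ab \<alpha> \<beta> n (k + 1) * S_ab \<alpha> \<beta> n (k - 1) \<le> (S_ab \<alpha> \<beta> n k)^2"
    by (simp add: mult.assoc)
qed

end
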